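(* Consider a finite discounted stochastic game which is a common interest game. Then for every decision maker $i\in\{1,\dots,N\}$, every $\bm{\pi}^*\in\bm{\Pi}_{\rm opt}$ and every $\tilde{\bm{\pi}}\in\bm{\Pi}\setminus\bm{\Pi}_{\rm opt}$, \[ \sum_{x\in\mathbb{X}} Q^{*i}_{\bm{\pi}^{*-i}}\big(x,\pi^{*i}(x)\big) \;<\; \sum_{x\in\mathbb{X}} Q^{*i}_{\tilde{\bm{\pi}}^{-i}}\big(x,\tilde{\pi}^{i}(x)\big). \]
   Context: A finite discounted stochastic game consists of $N\ge 1$ decision makers DM$^1,\dots,$DM$^N$; a finite state set $\mathbb{X}$; for each $i$ a finite action set $\mathbb{U}^i$, a discount factor $\beta^i\in(0,1)$ and a cost function $c^i:\mathbb{X}\times\mathbb{U}\to\mathbb{R}$, where $\mathbb{U}=\mathbb{U}^1\times\cdots\times\mathbb{U}^N$; and a transition kernel $P(\cdot\mid x,\mathbf{u})$, a probability distribution on $\mathbb{X}$ for each $(x,\mathbf{u})\in\mathbb{X}\times\mathbb{U}$. Let $\Pi^i$ be the set of all maps $\pi^i:\mathbb{X}\to\mathbb{U}^i$ (stationary deterministic policies), $\bm{\Pi}=\Pi^1\times\cdots\times\Pi^N$, $\bm{\Pi}^{-i}=\times_{j\ne i}\Pi^j$, and write $\bm{\pi}=(\pi^i,\bm{\pi}^{-i})$, $\bm{\pi}(x)=(\pi^1(x),\dots,\pi^N(x))$. For $\bm{\pi}\in\bm{\Pi}$ and $x\in\mathbb{X}$, $J^i_x(\bm{\pi})=E\big[\sum_{t\ge0}(\beta^i)^t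 c^i(x_t,\bm{\pi}(x_t))\mid x_0=x\big]$, where $x_{t+1}\sim P(\cdot\mid x_t,\bm{\pi}(x_t))$. For $\bm{\pi}^{-i}\in\bm{\Pi}^{-i}$, $Q^{*i}_{\bm{\pi}^{-i}}\in\mathbb{R}^{\mathbb{X}\times\mathbb{U}^i}$ denotes the optimal Q-factors of the MDP faced by DM$^i$ when the others use $\bm{\pi}^{-i}$, i.e. the unique solution of $Q(x,u^i)=c^i(x,u^i,\bm{\pi}^{-i}(x))+\beta^i\sum_{x'}P(x'\mid x,u^i,\bm{\pi}^{-i}(x))\min_{v\in\mathbb{U}^i}Q(x',v)$. The set of team-optimal policies is $\bm{\Pi}_{\rm opt}=\{\bm{\pi}^*\in\bm{\Pi}: J^i_x(\bm{\pi}^* )=\inf_{\bm{\pi}\in\bm{\Pi}}J^i_x(\bm{\pi})\ \forall i,\forall x\in\mathbb{X}\}$. The game is a common interest game if (i) $\bm{\Pi}_{\rm opt}\neq\emptyset$ and (ii) for every $\tilde{\bm{\pi}}\in\bm{\Pi}\setminus\bm{\Pi}_{\rm opt}$ and every $i$, $\inf_{\bm{\pi}\in\bm{\Pi}}\sum_{x\in\mathbb{X}}J^i_x(\bm{\pi})<\sum_{x\in\mathbb{X}}J^i_x(\tilde{\bm{\pi}})$. *)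

theory Defs
  imports "HOL-Probability.Probability"
begin

(* Decision makers are indexed by i \<in> {..<N}.
   States: a finite type 'x (the state set X = UNIV).
   Actions of all DMs live in one type 'u; DM i's action set is U i :: 'u set.
   A joint action is a function a :: nat \<Rightarrow> 'u (component i for DM i, i < N).
   A joint stationary deterministic policy is pol :: nat \<Rightarrow> 'x \<Rightarrow> 'u with
   pol i x \<in> U i for i < N, and (for extensionality) pol i = undefined for i \<ge> N. *)

definition joint_policies :: "nat \<Rightarrow> (nat \<Rightarrow> 'u set) \<Rightarrow> (nat \<Rightarrow> 'x \<Rightarrow> 'u) set" where
  "joint_policies N U = {pol. (\<forall>i<N. \<forall>x. pol i x \<in> U i) \<and> (\<forall>i\<ge>N. pol i = undefined)}"

definition joint_act :: "(nat \<Rightarrow> 'x \<Rightarrow> 'u) \<Rightarrow> 'x \<Rightarrow> (nat \<Rightarrow> 'u)" where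
  "joint_act pol x = (\<lambda>j. pol j x)"

fun state_dist :: "('x \<Rightarrow> (nat \<Rightarrow> 'u) \<Rightarrow> 'x pmf) \<Rightarrow> (nat \<Rightarrow> 'x \<Rightarrow> 'u) \<Rightarrow> 'x \<Rightarrow> nat \<Rightarrow> 'x pmf" where
  "state_dist P pol x 0 = return_pmf x"
| "state_dist P pol x (Suc t) = bind_pmf (state_dist P pol x t) (\<lambda>y. P y (joint_act pol y))"

definition J :: "(nat \<Rightarrow> 'x \<Rightarrow> (nat \<Rightarrow> 'u) \<Rightarrow> real) \<Rightarrow> (nat \<Rightarrow> real)
     \<Rightarrow> ('x \<Rightarrow> (nat \<Rightarrow> 'u) \<Rightarrow> 'x pmf) \<Rightarrow> nat \<Rightarrow> 'x \<Rightarrow> (nat \<Rightarrow> 'x \<Rightarrow> 'u) \<Rightarrow> real" where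
  "J c \<beta> P i x pol =
     (\<Sum>t. (\<beta> i) ^ t * measure_pmf.expectation (state_dist P pol x t) (\<lambda>y. c i y (joint_act pol y)))"

(* optimal Q-factors of the MDP faced by DM i when the others use pol^{-i}
   (the i-th component of pol is irrelevant); Q is indexed on X \<times> U^i and
   set to undefined outside U i *)
definition Qstar :: "(nat \<Rightarrow> 'u set) \<Rightarrow> (nat \<Rightarrow> 'x \<Rightarrow> (nat \<Rightarrow> 'u) \<Rightarrow> real) \<Rightarrow> (nat \<Rightarrow> real)
     \<Rightarrow> ('x::finite \<Rightarrow> (nat \<Rightarrow> 'u) \<Rightarrow> 'x pmf) \<Rightarrow> nat \<Rightarrow> (nat \<Rightarrow> 'x \<Rightarrow> 'u) \<Rightarrow> 'x \<Rightarrow> 'u \<Rightarrow> real" where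
  "Qstar U c \<beta> P i pol =
     (THE Q. (\<forall>x. \<forall>u\<in>U i.
                Q x u = c i x ((joint_act pol x)(i := u))
                        + \<beta> i * (\<Sum>x'\<in>UNIV. pmf (P x ((joint_act pol x)(i := u))) x' * Min (Q x' ` U i)))
           \<and> (\<forall>x u. u \<notin> U i \<longrightarrow> Q x u = undefined))"

definition team_opt :: "nat \<Rightarrow> (nat \<Rightarrow> 'u set) \<Rightarrow> (nat \<Rightarrow> 'x \<Rightarrow> (nat \<Rightarrow> 'u) \<Rightarrow> real) \<Rightarrow> (nat \<Rightarrow> real)
     \<Rightarrow> ('x \<Rightarrow> (nat \<Rightarrow> 'u) \<Rightarrow> 'x pmf) \<Rightarrow> (nat \<Rightarrow> 'x \<Rightarrow> 'u) set" where
  "team_opt N U c \<beta> P =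
     {pis \<in> joint_policies N U. \<forall>i<N. \<forall>x.
        J c \<beta> P i x pis = (INF pol\<in>joint_policies N U. J c \<beta> P i x pol)}"

definition common_interest :: "nat \<Rightarrow> (nat \<Rightarrow> 'u set) \<Rightarrow> (nat \<Rightarrow> 'x::finite \<Rightarrow> (nat \<Rightarrow> 'u) \<Rightarrow> real)
     \<Rightarrow> (nat \<Rightarrow> real) \<Rightarrow> ('x \<Rightarrow> (nat \<Rightarrow> 'u) \<Rightarrow> 'x pmf) \<Rightarrow> bool" where
  "common_interest N U c \<beta> P \<longleftrightarrow>
     team_opt N U c \<beta> P \<noteq> {} \<and>
     (\<forall>pit \<in> joint_policies N U - team_opt N U c \<beta> P. \<forall>i<N.
        (INF pol\<in>joint_policies N U. \<Sum>x\<in>UNIV. J c \<beta> P i x pol) < (\<Sum>x\<in>UNIV. J c \<beta> P i x pit))"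

end

theory Submission
  imports Defs
begin

text \<open>
  Fix DM i and the policies of the others. Then i faces a finite discounted MDP whose optimal
  value V is attained by a deterministic policy and whose optimal Q-factors are the one-step
  Q-factors of V; moreover V lies below the value of every deviation of i. For a team-optimal
  joint policy this squeezes V to its own value, so the left-hand sum is the total team-optimal
  value. For a non-optimal joint policy each summand on the right is at least V, hence at least
  the team-optimal value. If the two sums were equal, the own action of i would be a best
  response whose Q-factors equal the team-optimal value; as they then solve the policy
  evaluation equation of the non-optimal policy, that policy would attain the team optimum at
  every state, contradicting the common-interest gap.
\<close>

definition q_factor ::
    "('x \<Rightarrow> 'a \<Rightarrow> real) \<Rightarrow> real \<Rightarrow> ('x \<Rightarrow> 'a \<Rightarrow> 'x pmf) \<Rightarrow> ('x::finite \<Rightarrow> real) \<Rightarrow> 'x \<Rightarrow> 'a \<Rightarrow> real"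
  where "q_factor r b q v x u = r x u + b * (\<Sum>y\<in>UNIV. pmf (q x u) y * v y)"

lemma q_factor_diff:
  "q_factor r b q v x u - q_factor r b q w x u = b * (\<Sum>y\<in>UNIV. pmf (q x u) y * (v y - w y))"
  by (simp add: q_factor_def algebra_simps sum_subtractf)

lemma discounted_subsolution_nonpos:
  fixes g :: "'x::finite \<Rightarrow> real"
  assumes b: "0 \<le> b" "b < 1" and sub: "\<And>x. \<exists>q. g x \<le> b * (\<Sum>y\<in>UNIV. pmf q y * g y)"
  shows "g x \<le> 0"
proof -
  define D where "D = Max (range g)"
  have gD: "g y \<le> D" for y unfolding D_def by simp
  have "g z \<le> b * D" for z
  proof -
    obtain q where q: "g z \<le> b * (\<Sum>y\<in>UNIV. pmf q y * g y)" using sub by blast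
    have "(\<Sum>y\<in>UNIV. pmf q y * g y) \<le> (\<Sum>y\<in>UNIV. pmf q y * D)"
      by (rule sum_mono) (simp add: gD mult_left_mono)
    also have "\<dots> = D" by (simp add: sum_distrib_right[symmetric] sum_pmf_eq_1)
    finally show ?thesis using q b by (meson mult_left_mono order_trans)
  qed
  moreover have "D \<in> range g" unfolding D_def by (rule Max_in) auto
  ultimately have "D \<le> b * D" by auto
  hence "D \<le> 0" using b by (smt (verit) mult_le_cancel_right1)
  thus ?thesis using gD[of x] by simp
qed

lemma policy_evaluation_comparison:
  assumes b: "0 \<le> b" "b < 1"
    and sub: "\<And>x. v x \<le> q_factor r b q v x (\<sigma> x)"
    and super: "\<And>x. q_factor r b q w x (\<sigma> x) \<le> w x"
  shows "v x \<le> w x"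
proof -
  have "v x - w x \<le> 0"
  proof (rule discounted_subsolution_nonpos[OF b])
    fix z
    have "v z - w z \<le> q_factor r b q v z (\<sigma> z) - q_factor r b q w z (\<sigma> z)"
      using sub[of z] super[of z] by linarith
    thus "\<exists>p. v z - w z \<le> b * (\<Sum>y\<in>UNIV. pmf p y * (v y - w y))"
      unfolding q_factor_diff by blast
  qed
  thus ?thesis by simp
qed

lemma policy_evaluation_unique:
  assumes b: "0 \<le> b" "b < 1"
    and v: "\<And>x. v x = q_factor r b q v x (\<sigma> x)"
    and w: "\<And>x. w x = q_factor r b q w x (\<sigma> x)"
  shows "v = w"
proof
  fix x show "v x = w x"
    using policy_evaluation_comparison[OF b, of v r q \<sigma> w x]
      policy_evaluation_comparison[OF b, of w r q \<sigma> v x] v w by (simp add: antisym)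
qed

lemma bellman_optimality_unique:
  assumes A: "finite A" "A \<noteq> {}" and b: "0 \<le> b" "b < 1"
    and v: "\<And>x. v x = Min (q_factor r b q v x ` A)"
    and w: "\<And>x. w x = Min (q_factor r b q w x ` A)"
  shows "v = w"
proof -
  have le: "v' x \<le> w' x"
    if v': "\<And>x. v' x = Min (q_factor r b q v' x ` A)"
      and w': "\<And>x. w' x = Min (q_factor r b q w' x ` A)" for v' w' x
  proof -
    have "v' x - w' x \<le> 0"
    proof (rule discounted_subsolution_nonpos[OF b])
      fix z
      obtain u where u: "u \<in> A" "w' z = q_factor r b q w' z u"
        using obtains_MIN[OF A] w'[of z] by metis
      have "v' z \<le> q_factor r b q v' z u" using v'[of z] A u(1) by simp
      hence "v' z - w' z \<le> q_factor r b q v' z u - q_factor r b q w' z u" using u(2) by linarith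
      thus "\<exists>p. v' z - w' z \<le> b * (\<Sum>y\<in>UNIV. pmf p y * (v' y - w' y))"
        unfolding q_factor_diff by blast
    qed
    thus ?thesis by simp
  qed
  show ?thesis using le[OF v w] le[OF w v] by (simp add: fun_eq_iff antisym)
qed

lemma bellman_fixpoint_le_policy_value:
  assumes "finite A" and b: "0 \<le> b" "b < 1"
    and V: "\<And>x. V x = Min (q_factor r b q V x ` A)"
    and \<sigma>: "\<And>x. \<sigma> x \<in> A"
    and v: "\<And>x. v x = q_factor r b q v x (\<sigma> x)"
  shows "V x \<le> v x"
proof (rule policy_evaluation_comparison[OF b, where \<sigma>=\<sigma>])
  show "V z \<le> q_factor r b q V z (\<sigma> z)" for z
    using \<open>finite A\<close> \<sigma>[of z] by (subst V) simp
  show "q_factor r b q v z (\<sigma> z) \<le> v z" for z using v[of z] by simp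
qed

text \<open>Policy improvement: a deterministic policy minimising the total value over all
  initial states cannot be improved by acting greedily, so its value is a Bellman fixpoint.\<close>
lemma bellman_fixpoint_exists:
  fixes val :: "('x::finite \<Rightarrow> 'a) \<Rightarrow> 'x \<Rightarrow> real"
  assumes A: "finite A" "A \<noteq> {}" and b: "0 \<le> b" "b < 1"
    and eval: "\<And>\<sigma> x. \<forall>y. \<sigma> y \<in> A \<Longrightarrow> val \<sigma> x = q_factor r b q (val \<sigma>) x (\<sigma> x)"
  obtains \<sigma> where "\<forall>x. \<sigma> x \<in> A" "\<And>x. val \<sigma> x = Min (q_factor r b q (val \<sigma>) x ` A)"
proof -
  define S where "S = {\<sigma>::'x \<Rightarrow> 'a. \<forall>x. \<sigma> x \<in> A}"
  have "S = PiE UNIV (\<lambda>_. A)" unfolding S_def PiE_UNIV_domain by (auto simp: Pi_def)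
  hence finS: "finite S" using A by (simp add: finite_PiE)
  have "(\<lambda>_. SOME u. u \<in> A) \<in> S" unfolding S_def using A by (auto intro: someI_ex)
  hence "S \<noteq> {}" by auto
  then obtain \<sigma>s where \<sigma>s: "\<sigma>s \<in> S"
    and min: "\<And>\<sigma>. \<sigma> \<in> S \<Longrightarrow> (\<Sum>x\<in>UNIV. val \<sigma>s x) \<le> (\<Sum>x\<in>UNIV. val \<sigma> x)"
    using obtains_MIN[OF finS, of "\<lambda>\<sigma>. \<Sum>x\<in>UNIV. val \<sigma> x"] finS
    by (metis Min_le finite_imageI imageI)
  define V where "V = val \<sigma>s"
  let ?Q = "q_factor r b q V"
  have "\<forall>z. \<exists>u. u \<in> A \<and> ?Q z u = Min (?Q z ` A)"
    using obtains_MIN[OF A] by metis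
  then obtain \<sigma>' where \<sigma>': "\<And>z. \<sigma>' z \<in> A" "\<And>z. ?Q z (\<sigma>' z) = Min (?Q z ` A)" by metis
  have Min_le_V: "Min (?Q z ` A) \<le> V z" for z
    using \<sigma>s A eval[of \<sigma>s z] unfolding S_def V_def by simp
  have improves: "val \<sigma>' z \<le> V z" for z
  proof (rule policy_evaluation_comparison[OF b, where \<sigma>=\<sigma>'])
    show "val \<sigma>' x \<le> q_factor r b q (val \<sigma>') x (\<sigma>' x)" for x using eval \<sigma>'(1) by simp
    show "?Q x (\<sigma>' x) \<le> V x" for x using \<sigma>'(2) Min_le_V by simp
  qed
  have "V x = Min (?Q x ` A)" for x
  proof (rule ccontr)
    assume "V x \<noteq> Min (?Q x ` A)"
    hence gap: "Min (?Q x ` A) < V x" using Min_le_V[of x] by simp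
    have "val \<sigma>' x - V x = (?Q x (\<sigma>' x) - V x)
        + b * (\<Sum>y\<in>UNIV. pmf (q x (\<sigma>' x)) y * (val \<sigma>' y - V y))"
      using eval[of \<sigma>' x] \<sigma>'(1) q_factor_diff[of r b q "val \<sigma>'" x "\<sigma>' x" V] by simp
    also have "\<dots> \<le> ?Q x (\<sigma>' x) - V x"
      using b improves by (simp add: mult_nonneg_nonpos sum_nonpos)
    finally have "val \<sigma>' x < V x" using gap \<sigma>'(2) by simp
    hence "(\<Sum>x\<in>UNIV. val \<sigma>' x) < (\<Sum>x\<in>UNIV. V x)"
      using improves by (intro sum_strict_mono_ex1) auto
    moreover have "\<sigma>' \<in> S" using \<sigma>'(1) by (simp add: S_def)
    ultimately show False using min unfolding V_def by fastforce
  qed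
  with \<sigma>s that show ?thesis unfolding S_def V_def by blast
qed

lemma expectation_finite_pmf:
  fixes M :: "'x::finite pmf"
  shows "measure_pmf.expectation M f = (\<Sum>y\<in>UNIV. pmf M y * (f y :: real))"
  by (subst integral_measure_pmf[where A=UNIV]) auto

lemma state_dist_Suc_first_step:
  "state_dist P pol x (Suc t) = bind_pmf (P x (joint_act pol x)) (\<lambda>y. state_dist P pol y t)"
proof (induction t)
  case 0 thus ?case by (simp add: bind_return_pmf bind_return_pmf')
next
  case (Suc t)
  have "state_dist P pol x (Suc (Suc t))
      = bind_pmf (state_dist P pol x (Suc t)) (\<lambda>y. P y (joint_act pol y))"
    by simp
  also have "\<dots> = bind_pmf (P x (joint_act pol x)) (\<lambda>y. state_dist P pol y (Suc t))"
    by (simp only: Suc bind_assoc_pmf) simp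
  finally show ?case .
qed

lemma J_bellman:
  fixes P :: "'x::finite \<Rightarrow> (nat \<Rightarrow> 'u) \<Rightarrow> 'x pmf"
  assumes b: "\<bar>\<beta> i\<bar> < 1"
  shows "J c \<beta> P i x pol = c i x (joint_act pol x)
     + \<beta> i * (\<Sum>y\<in>UNIV. pmf (P x (joint_act pol x)) y * J c \<beta> P i y pol)"
proof -
  define C where "C y = c i y (joint_act pol y)" for y
  define E where "E t y = measure_pmf.expectation (state_dist P pol y t) C" for t y
  define M where "M = Max (range (\<lambda>y. \<bar>C y\<bar>))"
  have E_Suc: "E (Suc t) y = (\<Sum>z\<in>UNIV. pmf (P y (joint_act pol y)) z * E t z)" for t y
    unfolding E_def state_dist_Suc_first_step
    by (subst pmf_expectation_bind[where A=UNIV]) auto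
  have E_bound: "\<bar>E t y\<bar> \<le> M" for t y
  proof -
    have "\<bar>E t y\<bar> \<le> (\<Sum>z\<in>UNIV. \<bar>pmf (state_dist P pol y t) z * C z\<bar>)"
      unfolding E_def expectation_finite_pmf by (rule sum_abs)
    also have "\<dots> \<le> (\<Sum>z\<in>UNIV. pmf (state_dist P pol y t) z * M)"
      by (rule sum_mono) (simp add: abs_mult M_def mult_left_mono)
    also have "\<dots> = M" by (simp add: sum_distrib_right[symmetric] sum_pmf_eq_1)
    finally show ?thesis .
  qed
  have summable: "summable (\<lambda>t. \<beta> i ^ t * E t y)" for y
  proof (rule summable_comparison_test)
    show "\<exists>N. \<forall>t\<ge>N. norm (\<beta> i ^ t * E t y) \<le> M * \<bar>\<beta> i\<bar> ^ t"
      using E_bound by (intro exI[of _ 0] allI impI)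
        (simp add: abs_mult power_abs mult.commute[of M] mult_left_mono)
    show "summable (\<lambda>t. M * \<bar>\<beta> i\<bar> ^ t)"
      using b by (intro summable_mult summable_geometric) auto
  qed
  have J_E: "J c \<beta> P i y pol = (\<Sum>t. \<beta> i ^ t * E t y)" for y
    unfolding J_def E_def C_def ..
  have "(\<Sum>t. \<beta> i ^ t * E t x) = E 0 x + (\<Sum>t. \<beta> i ^ Suc t * E (Suc t) x)"
    using suminf_split_head[OF summable[of x]] by simp
  also have "(\<Sum>t. \<beta> i ^ Suc t * E (Suc t) x)
      = (\<Sum>t. \<Sum>z\<in>UNIV. \<beta> i * (pmf (P x (joint_act pol x)) z * (\<beta> i ^ t * E t z)))"
    by (simp add: E_Suc sum_distrib_left mult_ac)
  also have "\<dots> = (\<Sum>z\<in>UNIV. \<Sum>t. \<beta> i * (pmf (P x (joint_act pol x)) z * (\<beta> i ^ t * E t z)))"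
    by (rule suminf_sum) (intro summable_mult summable)
  also have "\<dots> = \<beta> i * (\<Sum>z\<in>UNIV. pmf (P x (joint_act pol x)) z * (\<Sum>t. \<beta> i ^ t * E t z))"
    by (simp add: suminf_mult summable summable_mult sum_distrib_left)
  finally show ?thesis unfolding J_E by (simp add: E_def C_def)
qed

definition deviation_q_factor ::
    "(nat \<Rightarrow> 'x \<Rightarrow> (nat \<Rightarrow> 'u) \<Rightarrow> real) \<Rightarrow> (nat \<Rightarrow> real) \<Rightarrow> ('x \<Rightarrow> (nat \<Rightarrow> 'u) \<Rightarrow> 'x pmf)
      \<Rightarrow> nat \<Rightarrow> (nat \<Rightarrow> 'x \<Rightarrow> 'u) \<Rightarrow> ('x::finite \<Rightarrow> real) \<Rightarrow> 'x \<Rightarrow> 'u \<Rightarrow> real"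
  where "deviation_q_factor c \<beta> P i pol =
    q_factor (\<lambda>x u. c i x ((joint_act pol x)(i := u))) (\<beta> i) (\<lambda>x u. P x ((joint_act pol x)(i := u)))"

lemma J_deviation_bellman:
  fixes P :: "'x::finite \<Rightarrow> (nat \<Rightarrow> 'u) \<Rightarrow> 'x pmf"
  assumes "\<bar>\<beta> i\<bar> < 1"
  shows "J c \<beta> P i x (pol(i := \<sigma>))
    = deviation_q_factor c \<beta> P i pol (\<lambda>y. J c \<beta> P i y (pol(i := \<sigma>))) x (\<sigma> x)"
proof -
  have "joint_act (pol(i := \<sigma>)) x = (joint_act pol x)(i := \<sigma> x)"
    by (simp add: joint_act_def fun_eq_iff)
  thus ?thesis using J_bellman[of \<beta> i c P x "pol(i := \<sigma>)", OF assms]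
    by (simp add: deviation_q_factor_def q_factor_def)
qed

lemma deviation_q_factor_is_q_factor:
  obtains r q where "deviation_q_factor c \<beta> P i pol = q_factor r (\<beta> i) q"
  unfolding deviation_q_factor_def by blast

definition best_response_value ::
    "(nat \<Rightarrow> 'u set) \<Rightarrow> (nat \<Rightarrow> 'x \<Rightarrow> (nat \<Rightarrow> 'u) \<Rightarrow> real) \<Rightarrow> (nat \<Rightarrow> real)
      \<Rightarrow> ('x::finite \<Rightarrow> (nat \<Rightarrow> 'u) \<Rightarrow> 'x pmf) \<Rightarrow> nat \<Rightarrow> (nat \<Rightarrow> 'x \<Rightarrow> 'u) \<Rightarrow> 'x \<Rightarrow> real"
  where "best_response_value U c \<beta> P i pol x = Min (Qstar U c \<beta> P i pol x ` U i)"

locale discounted_player =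
  fixes U :: "nat \<Rightarrow> 'u set" and c :: "nat \<Rightarrow> 'x::finite \<Rightarrow> (nat \<Rightarrow> 'u) \<Rightarrow> real"
    and \<beta> :: "nat \<Rightarrow> real" and P :: "'x \<Rightarrow> (nat \<Rightarrow> 'u) \<Rightarrow> 'x pmf" and i :: nat
  assumes actions: "finite (U i)" "U i \<noteq> {}"
    and discount: "0 \<le> \<beta> i" "\<beta> i < 1"
begin

lemma J_own_bellman:
  "J c \<beta> P i x pol = deviation_q_factor c \<beta> P i pol (\<lambda>y. J c \<beta> P i y pol) x (pol i x)"
  using J_deviation_bellman[of \<beta> i c P x pol "pol i"] discount by simp

lemma Qstar_eq_deviation_q_factor:
  assumes V: "\<And>x. V x = Min (deviation_q_factor c \<beta> P i pol V x ` U i)"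
  shows "Qstar U c \<beta> P i pol
    = (\<lambda>x u. if u \<in> U i then deviation_q_factor c \<beta> P i pol V x u else undefined)"
proof -
  define r where "r x u = c i x ((joint_act pol x)(i := u))" for x u
  define q where "q x u = P x ((joint_act pol x)(i := u))" for x u
  have Q: "deviation_q_factor c \<beta> P i pol = q_factor r (\<beta> i) q"
    unfolding deviation_q_factor_def r_def q_def ..
  let ?is_Qstar = "\<lambda>Q'. (\<forall>x. \<forall>u\<in>U i.
      Q' x u = c i x ((joint_act pol x)(i := u))
        + \<beta> i * (\<Sum>x'\<in>UNIV. pmf (P x ((joint_act pol x)(i := u))) x' * Min (Q' x' ` U i)))
    \<and> (\<forall>x u. u \<notin> U i \<longrightarrow> Q' x u = undefined)"
  have is_Qstar_iff: "?is_Qstar Q' \<longleftrightarrow>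
      (\<forall>x. \<forall>u\<in>U i. Q' x u = q_factor r (\<beta> i) q (\<lambda>y. Min (Q' y ` U i)) x u)
      \<and> (\<forall>x u. u \<notin> U i \<longrightarrow> Q' x u = undefined)" for Q'
    by (simp add: q_factor_def r_def q_def)
  define Q0 where "Q0 x u = (if u \<in> U i then q_factor r (\<beta> i) q V x u else undefined)" for x u
  have Min_Q0: "(\<lambda>y. Min (Q0 y ` U i)) = V"
    using V unfolding Q by (auto simp: fun_eq_iff Q0_def cong: image_cong)
  show ?thesis unfolding Qstar_def Q Q0_def[symmetric]
  proof (rule the_equality)
    show "?is_Qstar Q0" unfolding is_Qstar_iff Min_Q0 by (simp add: Q0_def)
  next
    fix Q' assume "?is_Qstar Q'"
    hence Q': "\<And>x u. u \<in> U i \<Longrightarrow> Q' x u = q_factor r (\<beta> i) q (\<lambda>y. Min (Q' y ` U i)) x u"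
      and undef: "\<And>x u. u \<notin> U i \<Longrightarrow> Q' x u = undefined"
      unfolding is_Qstar_iff by auto
    have "(\<lambda>y. Min (Q' y ` U i)) = V"
    proof (rule bellman_optimality_unique[OF actions discount])
      show "Min (Q' x ` U i) = Min (q_factor r (\<beta> i) q (\<lambda>y. Min (Q' y ` U i)) x ` U i)" for x
        using Q' by (simp cong: image_cong)
      show "V x = Min (q_factor r (\<beta> i) q V x ` U i)" for x using V unfolding Q .
    qed
    thus "Q' = Q0" using Q' undef by (auto simp: fun_eq_iff Q0_def)
  qed
qed

lemma best_response_value_characterization:
  obtains \<sigma> where "\<forall>x. \<sigma> x \<in> U i"
    and "best_response_value U c \<beta> P i pol = (\<lambda>x. J c \<beta> P i x (pol(i := \<sigma>)))"
    and "\<And>x. best_response_value U c \<beta> P i pol x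
      = Min (deviation_q_factor c \<beta> P i pol (best_response_value U c \<beta> P i pol) x ` U i)"
    and "\<And>x u. u \<in> U i \<Longrightarrow> Qstar U c \<beta> P i pol x u
      = deviation_q_factor c \<beta> P i pol (best_response_value U c \<beta> P i pol) x u"
proof -
  obtain r q where Q: "deviation_q_factor c \<beta> P i pol = q_factor r (\<beta> i) q"
    by (rule deviation_q_factor_is_q_factor)
  obtain \<sigma> where \<sigma>: "\<forall>x. \<sigma> x \<in> U i"
    and fixpoint: "\<And>x. J c \<beta> P i x (pol(i := \<sigma>))
      = Min (deviation_q_factor c \<beta> P i pol (\<lambda>y. J c \<beta> P i y (pol(i := \<sigma>))) x ` U i)"
    unfolding Q
  proof (rule bellman_fixpoint_exists[OF actions discount,
        of "\<lambda>\<sigma> x. J c \<beta> P i x (pol(i := \<sigma>))"])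
    show "J c \<beta> P i x (pol(i := \<sigma>))
        = q_factor r (\<beta> i) q (\<lambda>y. J c \<beta> P i y (pol(i := \<sigma>))) x (\<sigma> x)" for \<sigma> x using J_deviation_bellman[of \<beta> i c P x pol \<sigma>] discount unfolding Q by simp
  qed blast
  note Qstar = Qstar_eq_deviation_q_factor[OF fixpoint]
  have V: "best_response_value U c \<beta> P i pol = (\<lambda>x. J c \<beta> P i x (pol(i := \<sigma>)))"
  proof
    fix x
    have "best_response_value U c \<beta> P i pol x
        = Min (deviation_q_factor c \<beta> P i pol (\<lambda>y. J c \<beta> P i y (pol(i := \<sigma>))) x ` U i)"
      unfolding best_response_value_def Qstar by (simp cong: image_cong)
    thus "best_response_value U c \<beta> P i pol x = J c \<beta> P i x (pol(i := \<sigma>))"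
      using fixpoint[of x] by simp
  qed
  show ?thesis
  proof (rule that[OF \<sigma> V])
    show "best_response_value U c \<beta> P i pol x
        = Min (deviation_q_factor c \<beta> P i pol (best_response_value U c \<beta> P i pol) x ` U i)" for x
      unfolding V by (rule fixpoint)
    show "Qstar U c \<beta> P i pol x u
        = deviation_q_factor c \<beta> P i pol (best_response_value U c \<beta> P i pol) x u"
      if "u \<in> U i" for x u
      unfolding V Qstar using that by simp
  qed
qed

lemma best_response_value_le_J:
  assumes own: "\<And>x. pol i x \<in> U i"
  shows "best_response_value U c \<beta> P i pol x \<le> J c \<beta> P i x pol"
proof -
  obtain r q where Q: "deviation_q_factor c \<beta> P i pol = q_factor r (\<beta> i) q"
    by (rule deviation_q_factor_is_q_factor)
  have "\<And>x. best_response_value U c \<beta> P i pol x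
      = Min (deviation_q_factor c \<beta> P i pol (best_response_value U c \<beta> P i pol) x ` U i)"
    using best_response_value_characterization by metis
  moreover have "J c \<beta> P i x pol = q_factor r (\<beta> i) q (\<lambda>y. J c \<beta> P i y pol) x (pol i x)" for x
    using J_own_bellman[of x pol] unfolding Q .
  ultimately show ?thesis unfolding Q
    by (intro bellman_fixpoint_le_policy_value[OF actions(1) discount _ own])
qed

lemma Qstar_own_action_eq_J_if_value_eq_J:
  assumes own: "\<And>x. pol i x \<in> U i"
    and value_eq: "\<And>x. best_response_value U c \<beta> P i pol x = J c \<beta> P i x pol"
  shows "Qstar U c \<beta> P i pol x (pol i x) = J c \<beta> P i x pol"
proof -
  have "\<And>x u. u \<in> U i \<Longrightarrow> Qstar U c \<beta> P i pol x u
      = deviation_q_factor c \<beta> P i pol (best_response_value U c \<beta> P i pol) x u"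
    using best_response_value_characterization by metis
  moreover have "best_response_value U c \<beta> P i pol = (\<lambda>y. J c \<beta> P i y pol)"
    using value_eq by (rule ext)
  ultimately have "Qstar U c \<beta> P i pol x (pol i x)
      = deviation_q_factor c \<beta> P i pol (\<lambda>y. J c \<beta> P i y pol) x (pol i x)"
    using own by metis
  also have "\<dots> = J c \<beta> P i x pol" by (rule J_own_bellman[symmetric])
  finally show ?thesis .
qed

text \<open>Both sides solve the policy evaluation equation of pol.\<close>
lemma Qstar_own_action_eq_J_if_best_response:
  assumes own: "\<And>x. pol i x \<in> U i"
    and best: "\<And>x. Qstar U c \<beta> P i pol x (pol i x) = best_response_value U c \<beta> P i pol x"
  shows "Qstar U c \<beta> P i pol x (pol i x) = J c \<beta> P i x pol"
proof -
  obtain r q where Q: "deviation_q_factor c \<beta> P i pol = q_factor r (\<beta> i) q"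
    by (rule deviation_q_factor_is_q_factor)
  have "\<And>x u. u \<in> U i \<Longrightarrow> Qstar U c \<beta> P i pol x u
      = deviation_q_factor c \<beta> P i pol (best_response_value U c \<beta> P i pol) x u"
    using best_response_value_characterization by metis
  hence "best_response_value U c \<beta> P i pol y
      = q_factor r (\<beta> i) q (best_response_value U c \<beta> P i pol) y (pol i y)" for y
    using own best unfolding Q by metis
  moreover have "J c \<beta> P i y pol = q_factor r (\<beta> i) q (\<lambda>y. J c \<beta> P i y pol) y (pol i y)" for y
    using J_own_bellman[of y pol] unfolding Q .
  ultimately have "best_response_value U c \<beta> P i pol = (\<lambda>y. J c \<beta> P i y pol)"
    by (rule policy_evaluation_unique[OF discount])
  thus ?thesis using best by simp
qed

end

lemma finite_joint_policies:
  assumes "\<And>j. j < N \<Longrightarrow> finite (U j)"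
  shows "finite (joint_policies N U :: (nat \<Rightarrow> 'x::finite \<Rightarrow> 'u) set)"
proof -
  let ?restr = "\<lambda>pol::nat \<Rightarrow> 'x \<Rightarrow> 'u. restrict pol {..<N}"
  have "inj_on ?restr (joint_policies N U)"
  proof (rule inj_onI, rule ext)
    fix p q j
    assume "p \<in> joint_policies N U" "q \<in> joint_policies N U" "?restr p = ?restr q"
    thus "p j = q j" by (cases "j < N") (auto simp: joint_policies_def dest: fun_cong[of _ _ j])
  qed
  moreover have "?restr ` joint_policies N U \<subseteq> PiE {..<N} (\<lambda>j. PiE UNIV (\<lambda>_. U j))"
    by (auto simp: joint_policies_def PiE_UNIV_domain)
  moreover have "finite (PiE {..<N} (\<lambda>j. PiE (UNIV :: 'x set) (\<lambda>_. U j)))"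
    using assms by (intro finite_PiE) (auto intro: finite_PiE)
  ultimately show ?thesis by (meson finite_imageD finite_subset)
qed

lemma team_opt_le_J:
  assumes U: "\<And>j. j < N \<Longrightarrow> finite (U j)" and i: "i < N"
    and opt: "pis \<in> team_opt N U c \<beta> P" and pol: "pol \<in> joint_policies N U"
  shows "J c \<beta> P i x pis \<le> J c \<beta> P i x (pol :: nat \<Rightarrow> 'x::finite \<Rightarrow> 'u)"
proof -
  have "J c \<beta> P i x pis = (INF pol\<in>joint_policies N U. J c \<beta> P i x pol)"
    using opt i by (simp add: team_opt_def)
  also have "\<dots> \<le> J c \<beta> P i x pol"
    using finite_joint_policies[of N U, OF U] pol by (intro cINF_lower bdd_below_finite) auto
  finally show ?thesis .
qed

locale game_player = discounted_player U c \<beta> P i for U c \<beta> P i +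
  fixes N :: nat
  assumes player: "i < N" and finite_action_sets: "\<And>j. j < N \<Longrightarrow> finite (U j)"
begin

lemma own_action: "pol \<in> joint_policies N U \<Longrightarrow> pol i x \<in> U i"
  using player by (simp add: joint_policies_def)

lemma best_response_value_le_Qstar_own_action:
  assumes "pol \<in> joint_policies N U"
  shows "best_response_value U c \<beta> P i pol x \<le> Qstar U c \<beta> P i pol x (pol i x)"
  unfolding best_response_value_def using actions own_action[OF assms] by simp

lemma team_opt_le_best_response_value:
  assumes opt: "pis \<in> team_opt N U c \<beta> P" and pol: "pol \<in> joint_policies N U"
  shows "J c \<beta> P i x pis \<le> best_response_value U c \<beta> P i pol x"
proof -
  obtain \<sigma> where \<sigma>: "\<forall>x. \<sigma> x \<in> U i"
    and V: "best_response_value U c \<beta> P i pol = (\<lambda>x. J c \<beta> P i x (pol(i := \<sigma>)))"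
    using best_response_value_characterization by metis
  have "pol(i := \<sigma>) \<in> joint_policies N U" using pol \<sigma> player by (auto simp: joint_policies_def)
  from team_opt_le_J[OF finite_action_sets player opt this] show ?thesis unfolding V .
qed

lemma team_opt_le_Qstar_own_action:
  assumes opt: "pis \<in> team_opt N U c \<beta> P" and pol: "pol \<in> joint_policies N U"
  shows "J c \<beta> P i x pis \<le> Qstar U c \<beta> P i pol x (pol i x)"
  using team_opt_le_best_response_value[OF opt pol] best_response_value_le_Qstar_own_action[OF pol]
  by (rule order_trans)

lemma J_eq_team_opt_if_Qstar_own_action_eq:
  assumes opt: "pis \<in> team_opt N U c \<beta> P" and pol: "pol \<in> joint_policies N U"
    and eq: "\<And>x. Qstar U c \<beta> P i pol x (pol i x) = J c \<beta> P i x pis"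
  shows "J c \<beta> P i x pol = J c \<beta> P i x pis"
proof -
  have "Qstar U c \<beta> P i pol x (pol i x) = best_response_value U c \<beta> P i pol x" for x
    using team_opt_le_best_response_value[OF opt pol, of x] eq[of x]
      best_response_value_le_Qstar_own_action[OF pol, of x] by simp
  with eq Qstar_own_action_eq_J_if_best_response[where pol=pol, OF own_action[OF pol]]
  show ?thesis by metis
qed

lemma Qstar_own_action_team_opt:
  assumes opt: "pis \<in> team_opt N U c \<beta> P"
  shows "Qstar U c \<beta> P i pis x (pis i x) = J c \<beta> P i x pis"
proof -
  have pis: "pis \<in> joint_policies N U" using opt by (simp add: team_opt_def)
  show ?thesis
    using team_opt_le_best_response_value[OF opt pis]
      best_response_value_le_J[where pol=pis, OF own_action[OF pis]]
    by (intro Qstar_own_action_eq_J_if_value_eq_J[where pol=pis, OF own_action[OF pis]] antisym)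
qed

lemma common_interest_total_J_less:
  assumes CI: "common_interest N U c \<beta> P" and opt: "pis \<in> team_opt N U c \<beta> P"
    and nonopt: "pit \<in> joint_policies N U - team_opt N U c \<beta> P"
  shows "(\<Sum>x\<in>UNIV. J c \<beta> P i x pis) < (\<Sum>x\<in>UNIV. J c \<beta> P i x pit)"
proof -
  have "(\<Sum>x\<in>UNIV. J c \<beta> P i x pis) \<le> (INF pol\<in>joint_policies N U. \<Sum>x\<in>UNIV. J c \<beta> P i x pol)"
    using opt by (intro cINF_greatest sum_mono team_opt_le_J[OF finite_action_sets player opt])
      (auto simp: team_opt_def)
  also have "\<dots> < (\<Sum>x\<in>UNIV. J c \<beta> P i x pit)"
    using CI nonopt player unfolding common_interest_def by blast
  finally show ?thesis .
qed

end

theorem lemma1: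
  fixes N :: nat
    and U :: "nat \<Rightarrow> 'u set"
    and c :: "nat \<Rightarrow> 'x::finite \<Rightarrow> (nat \<Rightarrow> 'u) \<Rightarrow> real"
    and \<beta> :: "nat \<Rightarrow> real"
    and P :: "'x \<Rightarrow> (nat \<Rightarrow> 'u) \<Rightarrow> 'x pmf"
  assumes N: "N \<ge> 1"
    and U_fin: "\<And>i. i < N \<Longrightarrow> finite (U i)"
    and U_ne: "\<And>i. i < N \<Longrightarrow> U i \<noteq> {}"
    and beta: "\<And>i. i < N \<Longrightarrow> 0 < \<beta> i \<and> \<beta> i < 1"
    and CI: "common_interest N U c \<beta> P"
    and i: "i < N"
    and opt: "pis \<in> team_opt N U c \<beta> P"
    and nonopt: "pit \<in> joint_policies N U - team_opt N U c \<beta> P"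
  shows "(\<Sum>x\<in>UNIV. Qstar U c \<beta> P i pis x (pis i x))
           < (\<Sum>x\<in>UNIV. Qstar U c \<beta> P i pit x (pit i x))"
proof -
  interpret game_player U c \<beta> P i N
    using U_fin U_ne beta[OF i] i by unfold_locales auto
  have pit: "pit \<in> joint_policies N U" using nonopt by simp
  show ?thesis
  proof (rule ccontr)
    assume not_less: "\<not> ?thesis"
    have "Qstar U c \<beta> P i pit x (pit i x) = J c \<beta> P i x pis" for x
    proof (rule ccontr)
      assume "Qstar U c \<beta> P i pit x (pit i x) \<noteq> J c \<beta> P i x pis"
      hence "(\<Sum>x\<in>UNIV. J c \<beta> P i x pis) < (\<Sum>x\<in>UNIV. Qstar U c \<beta> P i pit x (pit i x))"
        using team_opt_le_Qstar_own_action[OF opt pit]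
        by (intro sum_strict_mono_ex1) (auto simp: order.strict_iff_order, metis)
      with not_less show False by (simp add: Qstar_own_action_team_opt[OF opt])
    qed
    hence "J c \<beta> P i x pit = J c \<beta> P i x pis" for x
      by (rule J_eq_team_opt_if_Qstar_own_action_eq[OF opt pit])
    with common_interest_total_J_less[OF CI opt nonopt] show False by simp
  qed
qed

end
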